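(* Let $n\geq 5$, let $B_n$ be the braid group on $n$ strands, and let $G$ be a finite group. If $f\colon B_n\rightarrow G$ is a homomorphism that is not cyclic, then \[ |G| \geq 2^{\lfloor n/2\rfloor-1}\left(\lfloor n/2\rfloor\right)!. \]
   Context: The abelianization of $B_n$ is infinite cyclic, $B_n/B_n'\cong\mathbb{Z}$, where $B_n'$ is the commutator subgroup. A homomorphism $B_n\rightarrow G$ is called cyclic if it factors through the abelianization map $B_n\rightarrow \mathbb{Z}$ (equivalently, if its kernel contains $B_n'$). *)

theory Defs
  imports "HOL-Algebra.Algebra"
begin

text \<open>Braid group B_n via its Artin presentation. A letter (i, True) stands for
  the generator sigma_i and (i, False) for its inverse, 1 \<le> i \<le> n-1.\<close>

type_synonym braid_word = "(nat \<times> bool) list"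

definition braid_letters :: "nat \<Rightarrow> (nat \<times> bool) set" where
  "braid_letters n = {1..<n} \<times> UNIV"

definition braid_words :: "nat \<Rightarrow> braid_word set" where
  "braid_words n = {w. set w \<subseteq> braid_letters n}"

inductive_set braid_cong :: "nat \<Rightarrow> (braid_word \<times> braid_word) set" for n where
  refl: "w \<in> braid_words n \<Longrightarrow> (w, w) \<in> braid_cong n"
| sym: "(x, y) \<in> braid_cong n \<Longrightarrow> (y, x) \<in> braid_cong n"
| trans: "(x, y) \<in> braid_cong n \<Longrightarrow> (y, z) \<in> braid_cong n \<Longrightarrow> (x, z) \<in> braid_cong n"
| ctxt: "(x, y) \<in> braid_cong n \<Longrightarrow> u \<in> braid_words n \<Longrightarrow> v \<in> braid_words n
         \<Longrightarrow> (u @ x @ v, u @ y @ v) \<in> braid_cong n"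
| cancel: "i \<in> {1..<n} \<Longrightarrow> ([(i, b), (i, \<not> b)], []) \<in> braid_cong n"
| far_comm: "i \<in> {1..<n} \<Longrightarrow> j \<in> {1..<n} \<Longrightarrow> i + 2 \<le> j
         \<Longrightarrow> ([(i, True), (j, True)], [(j, True), (i, True)]) \<in> braid_cong n"
| braid: "i \<in> {1..<n} \<Longrightarrow> Suc i \<in> {1..<n}
         \<Longrightarrow> ([(i, True), (Suc i, True), (i, True)],
              [(Suc i, True), (i, True), (Suc i, True)]) \<in> braid_cong n"

definition braid_group :: "nat \<Rightarrow> braid_word set monoid" where
  "braid_group n = \<lparr> carrier = braid_words n // braid_cong n,
     monoid.mult = (\<lambda>A B. \<Union>a\<in>A. \<Union>b\<in>B. braid_cong n `` {a @ b}),
     monoid.one = braid_cong n `` {[]} \<rparr>"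

text \<open>A homomorphism out of B_n is cyclic if it factors through the abelianization,
  i.e. its kernel contains the commutator subgroup.\<close>
definition cyclic_hom :: "'a monoid \<Rightarrow> ('b, 'c) monoid_scheme \<Rightarrow> ('a \<Rightarrow> 'b) \<Rightarrow> bool" where
  "cyclic_hom B G f \<longleftrightarrow> derived B (carrier B) \<subseteq> kernel B G f"

end

theory Submission
  imports Defs
begin

(* Let \<sigma> i be the image of the i-th Artin generator. If two of them coincide, the braid and
   commutation relations force (for n \<ge> 5) all of them to coincide, so the image of f is abelian
   and f is cyclic. Hence for non-cyclic f the elements \<tau> j = \<sigma> (2j-1), 1 \<le> j \<le> k = n div 2,
   are k distinct pairwise commuting elements, and conjugation by \<sigma> (2j) \<sigma> (2j-1) \<sigma> (2j+1) \<sigma> (2j)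
   swaps \<tau> j and \<tau> (j+1) and fixes the other \<tau>'s. So every permutation of the \<tau>'s is induced
   by conjugation with some element of G; these elements lie in k! distinct cosets of the
   centraliser of the \<tau>'s, which contains the 2^(k-1) distinct products of subsets of
   {\<tau> 1, ..., \<tau> (k-1)}. *)

lemma (in group) generate_commute:
  assumes "y \<in> carrier G" "S \<subseteq> carrier G" "\<And>s. s \<in> S \<Longrightarrow> y \<otimes> s = s \<otimes> y"
    and "h \<in> generate G S"
  shows "y \<otimes> h = h \<otimes> y"
  using assms(4)
proof (induction rule: generate.induct)
  case one
  then show ?case using assms(1) by simp
next
  case (incl s)
  then show ?case using assms(3) by simp
next
  case (inv s)
  then have s: "s \<in> carrier G" using assms(2) by auto
  have "inv s \<otimes> y = inv s \<otimes> (y \<otimes> s) \<otimes> inv s" using s assms(1) by (simp add: m_assoc)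
  also have "\<dots> = y \<otimes> inv s" using s assms(1) by (simp add: assms(3)[OF inv] m_assoc[symmetric])
  finally show ?case by simp
next
  case (eng h h')
  then have "h \<in> carrier G" "h' \<in> carrier G" using generate_in_carrier[OF assms(2)] by auto
  then show ?case using eng.IH assms(1) by (metis m_assoc)
qed

lemma (in group) generate_pairwise_commute:
  assumes "S \<subseteq> carrier G" "\<And>s s'. s \<in> S \<Longrightarrow> s' \<in> S \<Longrightarrow> s \<otimes> s' = s' \<otimes> s"
    and "h \<in> generate G S" "h' \<in> generate G S"
  shows "h \<otimes> h' = h' \<otimes> h"
proof (rule generate_commute[OF _ assms(1) _ assms(4)])
  show "h \<in> carrier G" using generate_in_carrier[OF assms(1,3)] .
  show "h \<otimes> s = s \<otimes> h" if "s \<in> S" for s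
    using generate_commute[OF _ assms(1) _ assms(3), of s] that assms(1,2) by auto
qed

lemma (in group) commuting_braid_eq:
  assumes "a \<in> carrier G" "b \<in> carrier G" "a \<otimes> b = b \<otimes> a" "a \<otimes> b \<otimes> a = b \<otimes> a \<otimes> b"
  shows "a = b"
proof -
  have "a \<otimes> (a \<otimes> b) = a \<otimes> (b \<otimes> b)"
    using assms by (metis m_assoc)
  then show ?thesis using assms(1,2) by simp
qed

lemma (in group) braid_conj_swap:
  assumes "a \<in> carrier G" "b \<in> carrier G" "c \<in> carrier G"
    and ac: "a \<otimes> c = c \<otimes> a" and ab: "a \<otimes> b \<otimes> a = b \<otimes> a \<otimes> b" and bc: "b \<otimes> c \<otimes> b = c \<otimes> b \<otimes> c"
  shows "b \<otimes> a \<otimes> c \<otimes> b \<otimes> a = c \<otimes> (b \<otimes> a \<otimes> c \<otimes> b)"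
proof -
  have ac': "a \<otimes> (c \<otimes> x) = c \<otimes> (a \<otimes> x)" if "x \<in> carrier G" for x
    using that assms(1,3) ac by (simp add: m_assoc[symmetric])
  have bc': "b \<otimes> (c \<otimes> (b \<otimes> x)) = c \<otimes> (b \<otimes> (c \<otimes> x))" if "x \<in> carrier G" for x
    using that assms(2,3) bc by (simp add: m_assoc[symmetric])
  have "b \<otimes> a \<otimes> c \<otimes> b \<otimes> a = b \<otimes> (c \<otimes> (a \<otimes> (b \<otimes> a)))"
    using assms(1-3) by (simp add: m_assoc ac')
  also have "\<dots> = b \<otimes> (c \<otimes> (b \<otimes> (a \<otimes> b)))"
    using assms(1-3) ab by (simp add: m_assoc)
  also have "\<dots> = c \<otimes> (b \<otimes> (c \<otimes> (a \<otimes> b)))"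
    using assms(1-3) by (simp add: bc')
  also have "\<dots> = c \<otimes> (b \<otimes> a \<otimes> c \<otimes> b)"
    using assms(1-3) by (simp add: m_assoc ac')
  finally show ?thesis .
qed

lemma (in group_hom) derived_subset_kernelI:
  assumes "\<And>a b. a \<in> carrier G \<Longrightarrow> b \<in> carrier G \<Longrightarrow> h a \<otimes>\<^bsub>H\<^esub> h b = h b \<otimes>\<^bsub>H\<^esub> h a"
  shows "derived G (carrier G) \<subseteq> kernel G H h"
proof -
  have "derived_set G (carrier G) \<subseteq> kernel G H h"
  proof
    fix z assume "z \<in> derived_set G (carrier G)"
    then obtain a b where ab: "a \<in> carrier G" "b \<in> carrier G"
      and z: "z = a \<otimes> b \<otimes> inv a \<otimes> inv b" by blast
    have "h z = h b \<otimes>\<^bsub>H\<^esub> h a \<otimes>\<^bsub>H\<^esub> inv\<^bsub>H\<^esub> h a \<otimes>\<^bsub>H\<^esub> inv\<^bsub>H\<^esub> h b"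
      using ab by (simp add: z assms)
    also have "\<dots> = \<one>\<^bsub>H\<^esub>"
      using ab by (simp add: H.m_assoc)
    finally show "z \<in> kernel G H h" using ab by (simp add: kernel_def z)
  qed
  then show ?thesis
    unfolding derived_def by (rule G.generate_subgroup_incl[OF _ subgroup_kernel])
qed

locale permutable_commuting_family = group G for G (structure) +
  fixes k :: nat and t :: "nat \<Rightarrow> 'a"
  assumes t_closed: "\<And>i. i \<in> {1..k} \<Longrightarrow> t i \<in> carrier G"
    and inj_on_t: "inj_on t {1..k}"
    and t_commute: "\<And>i j. i \<in> {1..k} \<Longrightarrow> j \<in> {1..k} \<Longrightarrow> t i \<otimes> t j = t j \<otimes> t i"
    and adjacent_swap: "\<And>i. 1 \<le> i \<Longrightarrow> i < k \<Longrightarrow>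
      \<exists>g\<in>carrier G. \<forall>j\<in>{1..k}. g \<otimes> t j = t (transpose i (Suc i) j) \<otimes> g"
begin

definition conj_realizes :: "'a \<Rightarrow> (nat \<Rightarrow> nat) \<Rightarrow> bool" where
  "conj_realizes g p \<longleftrightarrow> g \<in> carrier G \<and> (\<forall>j\<in>{1..k}. g \<otimes> t j = t (p j) \<otimes> g)"

lemma conj_realizes_one: "conj_realizes \<one> id"
  using t_closed by (simp add: conj_realizes_def)

lemma conj_realizes_mult:
  assumes g: "conj_realizes g p" and h: "conj_realizes h q"
    and p: "p permutes {1..k}" and q: "q permutes {1..k}"
  shows "conj_realizes (g \<otimes> h) (p \<circ> q)"
  unfolding conj_realizes_def
proof (intro conjI ballI)
  have gh: "g \<in> carrier G" "h \<in> carrier G" using g h by (simp_all add: conj_realizes_def)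
  then show "g \<otimes> h \<in> carrier G" by simp
  fix j assume j: "j \<in> {1..k}"
  then have qj: "q j \<in> {1..k}" and pqj: "p (q j) \<in> {1..k}"
    using permutes_in_image[OF p] permutes_in_image[OF q] by blast+
  have "g \<otimes> h \<otimes> t j = g \<otimes> (t (q j) \<otimes> h)"
    using gh j h t_closed by (simp add: m_assoc conj_realizes_def)
  also have "\<dots> = t (p (q j)) \<otimes> g \<otimes> h"
    using gh qj g t_closed by (simp add: m_assoc[symmetric] conj_realizes_def)
  also have "\<dots> = t ((p \<circ> q) j) \<otimes> (g \<otimes> h)"
    using gh pqj t_closed by (simp add: m_assoc)
  finally show "g \<otimes> h \<otimes> t j = t ((p \<circ> q) j) \<otimes> (g \<otimes> h)" .
qed

lemma conj_realizes_unique: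
  assumes "conj_realizes g p" "conj_realizes g q" "p permutes {1..k}" "q permutes {1..k}"
  shows "p = q"
proof
  fix j
  show "p j = q j"
  proof (cases "j \<in> {1..k}")
    case True
    then have "p j \<in> {1..k}" "q j \<in> {1..k}"
      using permutes_in_image[OF assms(3)] permutes_in_image[OF assms(4)] by blast+
    moreover have "t (p j) \<otimes> g = t (q j) \<otimes> g"
      using assms(1,2) True by (simp add: conj_realizes_def)
    ultimately have "t (p j) = t (q j)"
      using assms(1) t_closed by (simp add: conj_realizes_def)
    then show ?thesis using inj_on_t \<open>p j \<in> {1..k}\<close> \<open>q j \<in> {1..k}\<close> by (auto dest: inj_onD)
  next
    case False
    then show ?thesis using assms(3,4) by (simp add: permutes_not_in)
  qed
qed

lemma ex_conj_realizes_transpose: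
  assumes "a \<in> {1..k}" "b \<in> {1..k}"
  shows "\<exists>g. conj_realizes g (transpose a b)"
proof -
  have "\<exists>g. conj_realizes g (transpose a b)" if a: "a \<in> {1..k}" and "a \<le> b" "b \<le> k" for a b
    using that(2,3)
  proof (induction b rule: dec_induct)
    case base
    then show ?case using conj_realizes_one by (metis transpose_same)
  next
    case (step b)
    obtain g where g: "conj_realizes g (transpose a b)" using step by auto
    obtain h where h: "conj_realizes h (transpose b (Suc b))"
      using adjacent_swap[of b] step a by (auto simp: conj_realizes_def)
    have perms: "transpose a b permutes {1..k}" "transpose b (Suc b) permutes {1..k}"
      using step a by (auto intro: permutes_swap_id)
    have "transpose a (Suc b) = transpose a b \<circ> transpose b (Suc b) \<circ> transpose a b"
      using step by (auto simp: transpose_def fun_eq_iff)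
    then show ?case
      using conj_realizes_mult[OF conj_realizes_mult[OF g h perms] g _ perms(1)] perms
      by (metis permutes_compose)
  qed
  then show ?thesis
    using assms by (metis atLeastAtMost_iff nat_le_linear transpose_commute)
qed

lemma ex_conj_realizes_perm:
  assumes "p permutes {1..k}"
  shows "\<exists>g. conj_realizes g p"
  using assms finite_atLeastAtMost
proof (induction rule: permutes_induct)
  case id
  then show ?case using conj_realizes_one by blast
next
  case (swap a b p)
  then show ?case
    using ex_conj_realizes_transpose conj_realizes_mult permutes_swap_id by meson
qed

abbreviation T :: "('a, 'b) monoid_scheme" where
  "T \<equiv> subgroup_generated G (t ` {1..k})"

lemma carrier_T: "carrier T = generate G (t ` {1..k})"
proof -
  have "carrier G \<inter> t ` {1..k} = t ` {1..k}" using t_closed by auto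
  then show ?thesis by (simp add: carrier_subgroup_generated)
qed

lemma carrier_T_subset: "carrier T \<subseteq> carrier G"
  by (rule carrier_subgroup_generated_subset)

lemma T_commute_t:
  assumes "a \<in> carrier T" "j \<in> {1..k}"
  shows "t j \<otimes> a = a \<otimes> t j"
  by (rule generate_commute[of _ "t ` {1..k}"]) (use assms t_closed t_commute carrier_T in auto)

lemma mult_T [simp]: "a \<otimes>\<^bsub>T\<^esub> b = a \<otimes> b"
  by (simp add: subgroup_generated_def)

lemma t_in_T: "j \<in> {1..k} \<Longrightarrow> t j \<in> carrier T"
  unfolding carrier_T by (rule generate.incl) simp

lemma comm_group_T: "comm_group T"
proof (rule group.group_comm_groupI)
  show "group T" by simp
  fix a b assume "a \<in> carrier T" "b \<in> carrier T"
  then have "a \<in> generate G (t ` {1..k})" "b \<in> generate G (t ` {1..k})"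
    by (simp_all only: carrier_T)
  moreover have "t ` {1..k} \<subseteq> carrier G" using t_closed by blast
  moreover have "s \<otimes> s' = s' \<otimes> s" if "s \<in> t ` {1..k}" "s' \<in> t ` {1..k}" for s s'
    using that t_commute by blast
  ultimately show "a \<otimes>\<^bsub>T\<^esub> b = b \<otimes>\<^bsub>T\<^esub> a"
    using generate_pairwise_commute[of "t ` {1..k}" a b] by simp
qed

interpretation T: comm_group T
  by (rule comm_group_T)

lemma conj_realizes_T: "a \<in> carrier T \<Longrightarrow> conj_realizes a id"
  using T_commute_t carrier_T_subset by (auto simp: conj_realizes_def)

definition t_prod :: "nat set \<Rightarrow> 'a" where
  "t_prod S = finprod T t S"

lemma t_prod_in_T: "S \<subseteq> {1..k} \<Longrightarrow> t_prod S \<in> carrier T"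
  unfolding t_prod_def by (rule T.finprod_closed) (use t_in_T in auto)

lemma t_prod_closed: "S \<subseteq> {1..k} \<Longrightarrow> t_prod S \<in> carrier G"
  using t_prod_in_T carrier_T_subset by blast

lemma t_prod_empty: "t_prod {} = \<one>"
  unfolding t_prod_def T.finprod_empty by simp

lemma t_prod_insert:
  assumes "S \<subseteq> {1..k}" "j \<in> {1..k}" "j \<notin> S"
  shows "t_prod (insert j S) = t j \<otimes> t_prod S"
proof -
  have "t \<in> S \<rightarrow> carrier T" "t j \<in> carrier T"
    using assms t_in_T by auto
  then show ?thesis
    using T.finprod_insert[OF finite_subset[OF assms(1) finite_atLeastAtMost] assms(3)]
    by (simp add: t_prod_def)
qed

lemma conj_t_prod:
  assumes g: "conj_realizes g p" and p: "p permutes {1..k}" and "S \<subseteq> {1..k}"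
  shows "g \<otimes> t_prod S = t_prod (p ` S) \<otimes> g"
  using finite_subset[OF assms(3) finite_atLeastAtMost] assms(3)
proof (induction S rule: finite_induct)
  case empty
  then show ?case using g by (simp add: t_prod_empty conj_realizes_def)
next
  case (insert j S)
  then have j: "j \<in> {1..k}" and S: "S \<subseteq> {1..k}" by auto
  have pj: "p j \<in> {1..k}" "p j \<notin> p ` S" and pS: "p ` S \<subseteq> {1..k}"
    using insert.hyps(2) S j permutes_in_image[OF p] permutes_inj[OF p] by (auto dest: injD)
  have gc: "g \<in> carrier G" using g by (simp add: conj_realizes_def)
  have "g \<otimes> t_prod (insert j S) = (g \<otimes> t j) \<otimes> t_prod S"
    using insert.hyps(2) S j gc t_closed t_prod_closed by (simp add: t_prod_insert m_assoc)
  also have "\<dots> = t (p j) \<otimes> (g \<otimes> t_prod S)"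
    using g j pj S gc t_closed t_prod_closed by (simp add: conj_realizes_def m_assoc)
  also have "\<dots> = t_prod (p ` insert j S) \<otimes> g"
    using insert.IH S pj pS gc t_closed t_prod_closed by (simp add: t_prod_insert m_assoc)
  finally show ?case .
qed

text \<open>A conjugation realising the transposition (i k) replaces the factor t i of t_prod S by t k,
  but fixes t_prod S', since k lies in neither set.\<close>

lemma t_prod_separates:
  assumes S: "S \<subseteq> {1..<k}" and S': "S' \<subseteq> {1..<k}" and i: "i \<in> S" "i \<notin> S'"
  shows "t_prod S \<noteq> t_prod S'"
proof
  assume eq: "t_prod S = t_prod S'"
  have ik: "i \<in> {1..k}" "k \<in> {1..k}" "i \<noteq> k" using S i by auto
  obtain g where g: "conj_realizes g (transpose i k)"
    using ex_conj_realizes_transpose[OF ik(1,2)] by blast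
  have gc: "g \<in> carrier G" using g by (simp add: conj_realizes_def)
  have perm: "transpose i k permutes {1..k}" using ik by (intro permutes_swap_id)
  have fixed: "transpose i k x = x" if "x \<in> S' \<union> (S - {i})" for x
    using that S S' i by (auto simp: transpose_def)
  have sub: "S \<subseteq> {1..k}" "S' \<subseteq> {1..k}" "S - {i} \<subseteq> {1..k}" "insert k (S - {i}) \<subseteq> {1..k}"
    using S S' i by auto
  have "transpose i k ` S = insert (transpose i k i) (transpose i k ` (S - {i}))"
    by (metis image_insert insert_Diff i(1))
  also have "\<dots> = insert k (S - {i})"
    using fixed by simp
  finally have "g \<otimes> t_prod S = t_prod (insert k (S - {i})) \<otimes> g"
    using conj_t_prod[OF g perm sub(1)] by simp
  moreover have "g \<otimes> t_prod S' = t_prod S' \<otimes> g"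
    using conj_t_prod[OF g perm sub(2)] fixed by simp
  ultimately have "t_prod (insert k (S - {i})) = t_prod S"
    using eq gc sub t_prod_closed by simp
  also have "\<dots> = t_prod (insert i (S - {i}))"
    by (metis insert_Diff i(1))
  moreover have "t_prod (insert k (S - {i})) = t k \<otimes> t_prod (S - {i})"
    by (rule t_prod_insert) (use S i in auto)
  moreover have "t_prod (insert i (S - {i})) = t i \<otimes> t_prod (S - {i})"
    by (rule t_prod_insert) (use S i in auto)
  ultimately have "t k \<otimes> t_prod (S - {i}) = t i \<otimes> t_prod (S - {i})"
    by simp
  then have "t k = t i"
    using ik sub t_closed t_prod_closed by simp
  then show False
    using inj_on_t ik by (auto dest: inj_onD)
qed

lemma inj_on_t_prod: "inj_on t_prod (Pow {1..<k})"
proof (rule inj_onI, rule ccontr)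
  fix S S' assume S: "S \<in> Pow {1..<k}" "S' \<in> Pow {1..<k}" "t_prod S = t_prod S'" "S \<noteq> S'"
  then obtain i where "i \<in> S \<and> i \<notin> S' \<or> i \<in> S' \<and> i \<notin> S" by blast
  then show False
    using t_prod_separates[of S S' i] t_prod_separates[of S' S i] S by auto
qed

definition realizer :: "(nat \<Rightarrow> nat) \<Rightarrow> 'a" where
  "realizer p = (SOME g. conj_realizes g p)"

lemma conj_realizes_realizer: "p permutes {1..k} \<Longrightarrow> conj_realizes (realizer p) p"
  unfolding realizer_def by (rule someI_ex[OF ex_conj_realizes_perm])

lemma realizer_closed: "p permutes {1..k} \<Longrightarrow> realizer p \<in> carrier G"
  using conj_realizes_realizer by (simp add: conj_realizes_def)

text \<open>Elements of T commute with the family, so realizer p \<otimes> a still realises p: the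
  product determines p, and then a.\<close>

lemma inj_on_realizer_mult:
  "inj_on (\<lambda>(p, a). realizer p \<otimes> a) ({p. p permutes {1..k}} \<times> carrier T)"
proof (rule inj_onI, clarify)
  fix p a q b assume p: "p permutes {1..k}" and q: "q permutes {1..k}"
    and a: "a \<in> carrier T" and b: "b \<in> carrier T" and eq: "realizer p \<otimes> a = realizer q \<otimes> b"
  have "conj_realizes (realizer p \<otimes> a) (p \<circ> id)" "conj_realizes (realizer q \<otimes> b) (q \<circ> id)"
    using conj_realizes_mult[OF conj_realizes_realizer conj_realizes_T _ permutes_id] p q a b
    by simp_all
  then have "p = q" using conj_realizes_unique p q eq by simp
  moreover have "a = b"
    using eq a b realizer_closed[OF p] carrier_T_subset by (simp add: \<open>p = q\<close> subset_iff)
  ultimately show "p = q \<and> a = b" ..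
qed

theorem order_lower_bound:
  assumes "finite (carrier G)"
  shows "2 ^ (k - 1) * fact k \<le> order G"
proof -
  define Perms where "Perms = {p. p permutes {1..k}}"
  define Prods where "Prods = t_prod ` Pow {1..<k}"
  have "Prods \<subseteq> carrier T"
  proof
    fix a assume "a \<in> Prods"
    then obtain S where S: "S \<subseteq> {1..<k}" and a: "a = t_prod S" by (auto simp: Prods_def)
    from S have "S \<subseteq> {1..k}" by auto
    then show "a \<in> carrier T" unfolding a by (rule t_prod_in_T)
  qed
  then have "inj_on (\<lambda>(p, a). realizer p \<otimes> a) (Perms \<times> Prods)"
    unfolding Perms_def by (intro inj_on_subset[OF inj_on_realizer_mult] Sigma_mono) auto
  moreover have "(\<lambda>(p, a). realizer p \<otimes> a) ` (Perms \<times> Prods) \<subseteq> carrier G"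
    using realizer_closed \<open>Prods \<subseteq> carrier T\<close> carrier_T_subset by (auto simp: Perms_def)
  ultimately have "card (Perms \<times> Prods) \<le> order G"
    unfolding order_def using assms by (rule card_inj_on_le)
  moreover have "card Perms = fact k"
    unfolding Perms_def by (rule card_permutations) auto
  moreover have "card Prods = 2 ^ (k - 1)"
    using card_image[OF inj_on_t_prod] by (simp add: Prods_def card_Pow)
  ultimately show ?thesis by (simp add: card_cartesian_product mult.commute)
qed

end

lemma braid_cong_in_words:
  "(v, w) \<in> braid_cong n \<Longrightarrow> v \<in> braid_words n \<and> w \<in> braid_words n"
  by (induction rule: braid_cong.induct) (auto simp: braid_words_def braid_letters_def)

lemma braid_words_Nil [simp]: "[] \<in> braid_words n"
  by (simp add: braid_words_def)

lemma braid_words_Cons [simp]: "a # w \<in> braid_words n \<longleftrightarrow> a \<in> braid_letters n \<and> w \<in> braid_words n"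
  by (simp add: braid_words_def)

lemma braid_words_append [simp]: "v @ w \<in> braid_words n \<longleftrightarrow> v \<in> braid_words n \<and> w \<in> braid_words n"
  by (auto simp: braid_words_def)

lemma equiv_braid_cong: "equiv (braid_words n) (braid_cong n)"
  unfolding equiv_def refl_on_def sym_def trans_def
proof (intro conjI allI impI ballI subsetI)
  fix p assume "p \<in> braid_cong n"
  then show "p \<in> braid_words n \<times> braid_words n"
    using braid_cong_in_words by (cases p) auto
qed (auto intro: braid_cong.refl braid_cong.sym braid_cong.trans)

lemma braid_cong_append:
  assumes "(v, v') \<in> braid_cong n" and "(w, w') \<in> braid_cong n"
  shows "(v @ w, v' @ w') \<in> braid_cong n"
proof -
  have "([] @ v @ w, [] @ v' @ w) \<in> braid_cong n"
    using assms braid_cong_in_words by (intro braid_cong.ctxt) auto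
  moreover have "(v' @ w @ [], v' @ w' @ []) \<in> braid_cong n"
    using assms braid_cong_in_words by (intro braid_cong.ctxt) auto
  ultimately show ?thesis
    using braid_cong.trans by fastforce
qed

lemma braid_group_mult_classes:
  assumes "v \<in> braid_words n" and "w \<in> braid_words n"
  shows "braid_cong n `` {v} \<otimes>\<^bsub>braid_group n\<^esub> braid_cong n `` {w} = braid_cong n `` {v @ w}"
proof -
  have "(\<Union>x\<in>braid_cong n `` {v}. \<Union>y\<in>braid_cong n `` {w}. braid_cong n `` {x @ y})
      = braid_cong n `` {v @ w}"
  proof (intro equalityI subsetI)
    fix z assume "z \<in> (\<Union>x\<in>braid_cong n `` {v}. \<Union>y\<in>braid_cong n `` {w}. braid_cong n `` {x @ y})"
    then obtain x y where "(v, x) \<in> braid_cong n" "(w, y) \<in> braid_cong n" "(x @ y, z) \<in> braid_cong n"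
      by auto
    then show "z \<in> braid_cong n `` {v @ w}"
      using braid_cong_append braid_cong.trans by blast
  next
    fix z assume "z \<in> braid_cong n `` {v @ w}"
    moreover have "(v, v) \<in> braid_cong n" "(w, w) \<in> braid_cong n"
      using assms by (auto intro: braid_cong.refl)
    ultimately show "z \<in> (\<Union>x\<in>braid_cong n `` {v}. \<Union>y\<in>braid_cong n `` {w}. braid_cong n `` {x @ y})"
      by blast
  qed
  then show ?thesis by (simp add: braid_group_def)
qed

lemma carrier_braid_group: "carrier (braid_group n) = braid_words n // braid_cong n"
  by (simp add: braid_group_def)

lemma one_braid_group: "\<one>\<^bsub>braid_group n\<^esub> = braid_cong n `` {[]}"
  by (simp add: braid_group_def)

lemma braid_group_carrierE:
  assumes "x \<in> carrier (braid_group n)"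
  obtains w where "w \<in> braid_words n" "x = braid_cong n `` {w}"
  using assms by (auto simp: carrier_braid_group elim: quotientE)

definition braid_word_inv :: "braid_word \<Rightarrow> braid_word" where
  "braid_word_inv w = rev (map (\<lambda>(i, b). (i, \<not> b)) w)"

lemma braid_word_inv_in_words: "w \<in> braid_words n \<Longrightarrow> braid_word_inv w \<in> braid_words n"
  by (auto simp: braid_word_inv_def braid_words_def braid_letters_def)

lemma braid_cong_inv_append: "w \<in> braid_words n \<Longrightarrow> (braid_word_inv w @ w, []) \<in> braid_cong n"
proof (induction w)
  case Nil
  then show ?case by (simp add: braid_word_inv_def braid_cong.refl)
next
  case (Cons a w)
  obtain i b where a: "a = (i, b)" by force
  have w: "w \<in> braid_words n" and i: "i \<in> {1..<n}"
    using Cons.prems a by (auto simp: braid_letters_def)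
  have "([(i, \<not> b), (i, \<not> \<not> b)], []) \<in> braid_cong n"
    using i by (rule braid_cong.cancel)
  from braid_cong.ctxt[OF this braid_word_inv_in_words[OF w] w]
  have "(braid_word_inv w @ [(i, \<not> b), (i, b)] @ w, braid_word_inv w @ w) \<in> braid_cong n"
    by simp
  moreover have "braid_word_inv (a # w) @ a # w = braid_word_inv w @ [(i, \<not> b), (i, b)] @ w"
    by (simp add: braid_word_inv_def a)
  ultimately show ?case
    using Cons.IH[OF w] braid_cong.trans by fastforce
qed

lemma group_braid_group: "group (braid_group n)"
proof (rule groupI)
  fix x y assume "x \<in> carrier (braid_group n)" "y \<in> carrier (braid_group n)"
  then show "x \<otimes>\<^bsub>braid_group n\<^esub> y \<in> carrier (braid_group n)"
    by (elim braid_group_carrierE) (simp add: braid_group_mult_classes carrier_braid_group quotientI)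
next
  show "\<one>\<^bsub>braid_group n\<^esub> \<in> carrier (braid_group n)"
    by (simp add: one_braid_group carrier_braid_group quotientI)
next
  fix x y z
  assume "x \<in> carrier (braid_group n)" "y \<in> carrier (braid_group n)" "z \<in> carrier (braid_group n)"
  then show "x \<otimes>\<^bsub>braid_group n\<^esub> y \<otimes>\<^bsub>braid_group n\<^esub> z
      = x \<otimes>\<^bsub>braid_group n\<^esub> (y \<otimes>\<^bsub>braid_group n\<^esub> z)"
    by (elim braid_group_carrierE) (simp add: braid_group_mult_classes)
next
  fix x assume "x \<in> carrier (braid_group n)"
  then show "\<one>\<^bsub>braid_group n\<^esub> \<otimes>\<^bsub>braid_group n\<^esub> x = x"
    by (elim braid_group_carrierE) (simp add: braid_group_mult_classes one_braid_group)
next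
  fix x assume "x \<in> carrier (braid_group n)"
  then obtain w where w: "w \<in> braid_words n" and x: "x = braid_cong n `` {w}"
    by (rule braid_group_carrierE)
  have "braid_cong n `` {braid_word_inv w} \<in> carrier (braid_group n)"
    using braid_word_inv_in_words[OF w] by (simp add: carrier_braid_group quotientI)
  moreover have "braid_cong n `` {braid_word_inv w} \<otimes>\<^bsub>braid_group n\<^esub> x = \<one>\<^bsub>braid_group n\<^esub>"
    using w braid_word_inv_in_words[OF w] equiv_class_eq[OF equiv_braid_cong braid_cong_inv_append[OF w]]
    by (simp add: x braid_group_mult_classes one_braid_group)
  ultimately show "\<exists>y\<in>carrier (braid_group n). y \<otimes>\<^bsub>braid_group n\<^esub> x = \<one>\<^bsub>braid_group n\<^esub>"
    by blast
qed

lemma eq_on_interval_if_Suc_eq: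
  fixes g :: "nat \<Rightarrow> 'b"
  assumes "\<And>m. a \<le> m \<Longrightarrow> m < b \<Longrightarrow> g (Suc m) = g m" and "a \<le> i" "i \<le> b"
  shows "g i = g a"
  using assms(2,3) by (induction i rule: dec_induct) (use assms(1) in auto)

locale braid_rep = group G for G (structure) +
  fixes n :: nat and f :: "braid_word set \<Rightarrow> 'a"
  assumes f_hom: "f \<in> hom (braid_group n) G"
begin

abbreviation braid_class :: "braid_word \<Rightarrow> braid_word set" where
  "braid_class w \<equiv> braid_cong n `` {w}"

definition \<sigma> :: "nat \<Rightarrow> 'a" where
  "\<sigma> i = f (braid_class [(i, True)])"

lemma group_hom_f: "group_hom (braid_group n) G f"
  using f_hom group_braid_group is_group
  by (simp add: group_hom_def group_hom_axioms_def)

lemma braid_class_closed: "w \<in> braid_words n \<Longrightarrow> braid_class w \<in> carrier (braid_group n)"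
  by (simp add: carrier_braid_group quotientI)

lemma f_class_closed: "w \<in> braid_words n \<Longrightarrow> f (braid_class w) \<in> carrier G"
  using braid_class_closed f_hom by (simp add: hom_in_carrier)

lemma f_class_eq:
  assumes "(v, w) \<in> braid_cong n"
  shows "f (braid_class v) = f (braid_class w)"
  using equiv_class_eq[OF equiv_braid_cong assms] by simp

lemma f_class_Nil: "f (braid_class []) = \<one>"
  using group_hom.hom_one[OF group_hom_f] by (simp add: one_braid_group)

lemma f_class_append:
  assumes "v \<in> braid_words n" "w \<in> braid_words n"
  shows "f (braid_class (v @ w)) = f (braid_class v) \<otimes> f (braid_class w)"
  using hom_mult[OF f_hom braid_class_closed braid_class_closed, OF assms]
  by (simp add: braid_group_mult_classes[OF assms])

lemma f_class_Cons:
  "a \<in> braid_letters n \<Longrightarrow> w \<in> braid_words n \<Longrightarrow>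
    f (braid_class (a # w)) = f (braid_class [a]) \<otimes> f (braid_class w)"
  using f_class_append[of "[a]" w] by simp

lemma f_class_Cons_\<sigma>:
  "i \<in> {1..<n} \<Longrightarrow> w \<in> braid_words n \<Longrightarrow> f (braid_class ((i, True) # w)) = \<sigma> i \<otimes> f (braid_class w)"
  unfolding \<sigma>_def by (rule f_class_Cons) (simp_all add: braid_letters_def)

lemma \<sigma>_closed: "i \<in> {1..<n} \<Longrightarrow> \<sigma> i \<in> carrier G"
  unfolding \<sigma>_def by (rule f_class_closed) (simp add: braid_letters_def)

lemma f_letter:
  assumes i: "i \<in> {1..<n}"
  shows "f (braid_class [(i, b)]) = (if b then \<sigma> i else inv \<sigma> i)"
proof (cases b)
  case True
  then show ?thesis by (simp add: \<sigma>_def)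
next
  case False
  have "f (braid_class [(i, True), (i, False)]) = \<one>"
    using f_class_eq[OF braid_cong.cancel[OF i, of True]] by (simp add: f_class_Nil)
  then have "\<sigma> i \<otimes> f (braid_class [(i, False)]) = \<one>"
    using i f_class_Cons_\<sigma>[of i "[(i, False)]"] by (simp add: braid_letters_def)
  then show ?thesis
    using False i \<sigma>_closed f_class_closed[of "[(i, False)]"]
    by (simp add: braid_letters_def inv_equality[symmetric] inv_comm)
qed

lemma f_class_in_generate: "w \<in> braid_words n \<Longrightarrow> f (braid_class w) \<in> generate G (\<sigma> ` {1..<n})"
proof (induction w)
  case Nil
  then show ?case by (simp add: f_class_Nil generate.one)
next
  case (Cons a w)
  obtain i b where a: "a = (i, b)" by force
  with Cons.prems have i: "i \<in> {1..<n}" by (simp add: braid_letters_def)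
  have "f (braid_class [a]) \<in> generate G (\<sigma> ` {1..<n})"
    using i by (auto simp: a f_letter intro: generate.incl generate.inv)
  moreover have "f (braid_class (a # w)) = f (braid_class [a]) \<otimes> f (braid_class w)"
    using Cons.prems by (intro f_class_Cons) simp_all
  ultimately show ?case
    using Cons by (metis braid_words_Cons generate.eng)
qed

lemma cyclic_if_\<sigma>_commute:
  assumes "\<And>i j. i \<in> {1..<n} \<Longrightarrow> j \<in> {1..<n} \<Longrightarrow> \<sigma> i \<otimes> \<sigma> j = \<sigma> j \<otimes> \<sigma> i"
  shows "cyclic_hom (braid_group n) G f"
  unfolding cyclic_hom_def
proof (rule group_hom.derived_subset_kernelI[OF group_hom_f])
  have gens: "\<sigma> ` {1..<n} \<subseteq> carrier G" using \<sigma>_closed by blast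
  have comm: "s \<otimes> s' = s' \<otimes> s" if "s \<in> \<sigma> ` {1..<n}" "s' \<in> \<sigma> ` {1..<n}" for s s'
    using that assms by blast
  fix x y assume "x \<in> carrier (braid_group n)" "y \<in> carrier (braid_group n)"
  then obtain v w where "v \<in> braid_words n" "x = braid_class v" "w \<in> braid_words n" "y = braid_class w"
    by (metis braid_group_carrierE)
  then have "f x \<in> generate G (\<sigma> ` {1..<n})" "f y \<in> generate G (\<sigma> ` {1..<n})"
    using f_class_in_generate by blast+
  then show "f x \<otimes> f y = f y \<otimes> f x"
    using generate_pairwise_commute[OF gens comm] by blast
qed

lemma \<sigma>_braid:
  assumes "i \<in> {1..<n}" "Suc i \<in> {1..<n}"
  shows "\<sigma> i \<otimes> \<sigma> (Suc i) \<otimes> \<sigma> i = \<sigma> (Suc i) \<otimes> \<sigma> i \<otimes> \<sigma> (Suc i)"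
  using f_class_eq[OF braid_cong.braid[OF assms]] assms \<sigma>_closed
  by (simp add: f_class_Cons_\<sigma> f_class_Nil braid_letters_def m_assoc)

lemma \<sigma>_commute:
  assumes "i \<in> {1..<n}" "j \<in> {1..<n}" "i + 2 \<le> j \<or> j + 2 \<le> i"
  shows "\<sigma> i \<otimes> \<sigma> j = \<sigma> j \<otimes> \<sigma> i"
proof -
  have "\<sigma> i \<otimes> \<sigma> j = \<sigma> j \<otimes> \<sigma> i" if "i \<in> {1..<n}" "j \<in> {1..<n}" "i + 2 \<le> j" for i j
    using f_class_eq[OF braid_cong.far_comm[OF that]] that \<sigma>_closed
    by (simp add: f_class_Cons_\<sigma> f_class_Nil braid_letters_def)
  then show ?thesis using assms by metis
qed

lemma \<sigma>_eq_if_commute: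
  assumes "i \<in> {1..<n}" "Suc i \<in> {1..<n}" "\<sigma> i \<otimes> \<sigma> (Suc i) = \<sigma> (Suc i) \<otimes> \<sigma> i"
  shows "\<sigma> i = \<sigma> (Suc i)"
  using commuting_braid_eq \<sigma>_closed \<sigma>_braid assms by blast

lemma \<sigma>_adjacent_eq_iff:
  assumes "1 \<le> m" "m + 2 < n"
  shows "\<sigma> m = \<sigma> (Suc m) \<longleftrightarrow> \<sigma> (Suc m) = \<sigma> (Suc (Suc m))"
proof -
  have range: "m \<in> {1..<n}" "Suc m \<in> {1..<n}" "Suc (Suc m) \<in> {1..<n}"
    using assms by auto
  have far: "\<sigma> m \<otimes> \<sigma> (Suc (Suc m)) = \<sigma> (Suc (Suc m)) \<otimes> \<sigma> m"
    using \<sigma>_commute[OF range(1,3)] by simp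
  show ?thesis
  proof
    assume "\<sigma> m = \<sigma> (Suc m)"
    then show "\<sigma> (Suc m) = \<sigma> (Suc (Suc m))"
      using \<sigma>_eq_if_commute[OF range(2,3)] far by simp
  next
    assume "\<sigma> (Suc m) = \<sigma> (Suc (Suc m))"
    then show "\<sigma> m = \<sigma> (Suc m)"
      using \<sigma>_eq_if_commute[OF range(1,2)] far by simp
  qed
qed

lemma cyclic_if_adjacent_eq:
  assumes "i \<in> {1..<n}" "Suc i \<in> {1..<n}" "\<sigma> i = \<sigma> (Suc i)"
  shows "cyclic_hom (braid_group n) G f"
proof -
  define adj where "adj m \<longleftrightarrow> \<sigma> m = \<sigma> (Suc m)" for m
  have "adj (Suc m) = adj m" if "1 \<le> m" "m < n - 2" for m
    using \<sigma>_adjacent_eq_iff[of m] that by (simp add: adj_def)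
  then have adj_const: "adj m = adj 1" if "1 \<le> m" "m \<le> n - 2" for m
    using eq_on_interval_if_Suc_eq[of 1 "n - 2" adj] that by blast
  have adjacent_eq: "\<sigma> m = \<sigma> (Suc m)" if "1 \<le> m" "m \<le> n - 2" for m
    using adj_const[OF that] adj_const[of i] assms by (simp add: adj_def)
  have step: "\<sigma> (Suc m) = \<sigma> m" if "1 \<le> m" "m < n - 1" for m
    using adjacent_eq[of m] that by simp
  have const: "\<sigma> j = \<sigma> 1" if "j \<in> {1..<n}" for j
    using step by (rule eq_on_interval_if_Suc_eq) (use that in auto)
  show ?thesis
    by (rule cyclic_if_\<sigma>_commute) (metis const)
qed

lemma inj_on_\<sigma>_if_not_cyclic:
  assumes n: "5 \<le> n" and not_cyclic: "\<not> cyclic_hom (braid_group n) G f"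
  shows "inj_on \<sigma> {1..<n}"
proof (rule linorder_inj_onI', rule notI)
  fix a b assume a: "a \<in> {1..<n}" and b: "b \<in> {1..<n}" and "a < b" and eq: "\<sigma> a = \<sigma> b"
  have no_adjacent_eq: "\<sigma> m \<noteq> \<sigma> (Suc m)" if "m \<in> {1..<n}" "Suc m \<in> {1..<n}" for m
    using cyclic_if_adjacent_eq that not_cyclic by blast
  have no_adjacent_commute: "\<sigma> m \<otimes> \<sigma> (Suc m) \<noteq> \<sigma> (Suc m) \<otimes> \<sigma> m"
    if "m \<in> {1..<n}" "Suc m \<in> {1..<n}" for m
    using \<sigma>_eq_if_commute no_adjacent_eq that by blast
  consider "b = Suc a" | "a + 3 \<le> b" | "b = a + 2" "2 \<le> a" | "a = 1" "b = 3"
    using \<open>a < b\<close> a by (simp add: atLeastLessThan_iff) linarith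
  then show False
  proof cases
    case 1
    then show False using no_adjacent_eq a b eq by blast
  next
    case 2
    then show False
      using no_adjacent_commute[of a] \<sigma>_commute[of "Suc a" b] a b eq by auto
  next
    case 3
    then have "a - 1 \<in> {1..<n}" "Suc (a - 1) = a" using a by auto
    then show False
      using no_adjacent_commute[of "a - 1"] \<sigma>_commute[of "a - 1" b] 3 a b eq by auto
  next
    case 4
    txt \<open>The only place where 5 \<le> n is needed: \<sigma> 4 has to exist.\<close>
    then show False
      using no_adjacent_commute[of 3] \<sigma>_commute[of 1 4] n eq by (auto simp: numeral_eq_Suc)
  qed
qed

definition \<tau> :: "nat \<Rightarrow> 'a" where
  "\<tau> j = \<sigma> (2 * j - 1)"

lemma \<tau>_closed: "j \<in> {1..n div 2} \<Longrightarrow> \<tau> j \<in> carrier G"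
  unfolding \<tau>_def by (rule \<sigma>_closed) auto

lemma \<tau>_commute: "i \<in> {1..n div 2} \<Longrightarrow> j \<in> {1..n div 2} \<Longrightarrow> \<tau> i \<otimes> \<tau> j = \<tau> j \<otimes> \<tau> i"
  unfolding \<tau>_def by (cases "i = j") (auto intro!: \<sigma>_commute)

lemma inj_on_\<tau>_if_not_cyclic:
  assumes "5 \<le> n" "\<not> cyclic_hom (braid_group n) G f"
  shows "inj_on \<tau> {1..n div 2}"
proof -
  have "inj_on (\<lambda>j. 2 * j - 1) {1..n div 2}" by (auto intro: inj_onI)
  moreover have "(\<lambda>j. 2 * j - 1) ` {1..n div 2} \<subseteq> {1..<n}" by auto
  ultimately show ?thesis
    using comp_inj_on inj_on_subset inj_on_\<sigma>_if_not_cyclic[OF assms]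
    unfolding \<tau>_def comp_def by blast
qed

lemma \<tau>_adjacent_swap:
  assumes i: "1 \<le> i" "i < n div 2"
  shows "\<exists>g\<in>carrier G. \<forall>j\<in>{1..n div 2}. g \<otimes> \<tau> j = \<tau> (transpose i (Suc i) j) \<otimes> g"
proof -
  define a b c where "a = \<sigma> (2 * i - 1)" and "b = \<sigma> (2 * i)" and "c = \<sigma> (2 * i + 1)"
  have range: "2 * i - 1 \<in> {1..<n}" "2 * i \<in> {1..<n}" "2 * i + 1 \<in> {1..<n}" "Suc (2 * i - 1) = 2 * i"
    using i by auto
  have abc: "a \<in> carrier G" "b \<in> carrier G" "c \<in> carrier G"
    using range \<sigma>_closed by (simp_all add: a_def b_def c_def)
  have ac: "a \<otimes> c = c \<otimes> a"
    unfolding a_def c_def using range by (intro \<sigma>_commute) auto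
  have ab: "a \<otimes> b \<otimes> a = b \<otimes> a \<otimes> b"
    unfolding a_def b_def using \<sigma>_braid[of "2 * i - 1"] range by simp
  have bc: "b \<otimes> c \<otimes> b = c \<otimes> b \<otimes> c"
    unfolding b_def c_def using \<sigma>_braid[of "2 * i"] range by simp
  txt \<open>The image of the braid that exchanges the strand pairs (2i-1, 2i) and (2i+1, 2i+2).\<close>
  define g where "g = b \<otimes> a \<otimes> c \<otimes> b"
  have "g \<in> carrier G" using abc by (simp add: g_def)
  moreover have "g \<otimes> \<tau> j = \<tau> (transpose i (Suc i) j) \<otimes> g" if j: "j \<in> {1..n div 2}" for j
  proof -
    consider "j = i" | "j = Suc i" | "j \<noteq> i" "j \<noteq> Suc i" by blast
    then show ?thesis
    proof cases
      case 1
      then show ?thesis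
        using braid_conj_swap[OF abc ac ab bc] by (simp add: g_def \<tau>_def a_def c_def)
    next
      case 2
      have "b \<otimes> c \<otimes> a \<otimes> b = g"
        using abc ac by (simp add: g_def m_assoc)
      then show ?thesis
        using braid_conj_swap[OF abc(3,2,1) ac[symmetric] bc[symmetric] ab[symmetric]] 2
        by (simp add: \<tau>_def a_def c_def)
    next
      case 3
      then have "2 * j - 1 \<in> {1..<n}" "2 * j - 1 + 2 \<le> 2 * i - 1 \<or> 2 * i + 1 + 2 \<le> 2 * j - 1"
        using j i by auto
      then have "\<tau> j \<otimes> x = x \<otimes> \<tau> j" if "x \<in> {a, b, c}" for x
        using that range unfolding \<tau>_def a_def b_def c_def by (auto intro!: \<sigma>_commute)
      then show ?thesis
        using 3 abc \<tau>_closed[OF j] by (simp add: g_def transpose_def) (metis m_assoc m_closed)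
    qed
  qed
  ultimately show ?thesis by blast
qed

lemma permutable_commuting_family_\<tau>:
  assumes "5 \<le> n" "\<not> cyclic_hom (braid_group n) G f"
  shows "permutable_commuting_family G (n div 2) \<tau>"
  using \<tau>_closed \<tau>_commute inj_on_\<tau>_if_not_cyclic[OF assms] \<tau>_adjacent_swap
  by unfold_locales blast+

end

theorem theorem1p1:
  fixes n :: nat and G :: "('g, 'c) monoid_scheme" and f :: "braid_word set \<Rightarrow> 'g"
  assumes "n \<ge> 5"
    and "group G"
    and "finite (carrier G)"
    and "f \<in> hom (braid_group n) G"
    and "\<not> cyclic_hom (braid_group n) G f"
  shows "order G \<ge> 2 ^ (n div 2 - 1) * fact (n div 2)"
proof -
  interpret braid_rep G n f
    using assms(2,4) by (intro braid_rep.intro braid_rep_axioms.intro)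
  interpret permutable_commuting_family G "n div 2" \<tau>
    using permutable_commuting_family_\<tau>[OF assms(1,5)] .
  show ?thesis
    using order_lower_bound[OF assms(3)] .
qed

end
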